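(* Let $\Gamma$ be an additive subgroup of $\mathbb{R}$ and let $\mu_1,\ldots,\mu_m\in\mathbb{R}$ be such that their classes in $\mathbb{R}/\langle\Gamma\rangle$ are $\mathbb{Q}$-linearly independent. Let $\Gamma'=\langle\Gamma\cup\{\mu_1,\ldots,\mu_m\}\rangle$, so that every $\alpha\in\Gamma'$ can be written uniquely as $\alpha=[\alpha]_\Gamma+\sum_{j=1}^m[\alpha]_{\mu_j}\mu_j$ with $[\alpha]_\Gamma\in\langle\Gamma\rangle$ and $[\alpha]_{\mu_j}\in\mathbb{Q}$. Then for every $j=1,\ldots,m$ there exists a derivation $\mathcal{D}_j$ of $\mathbb{C}((x^{\Gamma'}))$ (a $\mathbb{C}$-linear map satisfying the Leibniz rule) such that \[ \mathcal{D}_j\Big(\sum_{i\ge1}c_ix^{\alpha_i}\Big)=\sum_{i\ge1}c_i[\alpha_i]_{\mu_j}x^{\alpha_i}. \]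
   Context: $\Omega$ denotes the field of generalized power series $\sum_{i\ge1}c_i x^{\mu_i}$ with $c_i\in\mathbb{C}$, $\mu_i\in\mathbb{R}$ strictly increasing and tending to $\infty$ when there are infinitely many terms. For $E\subset\mathbb{R}$, $\langle E\rangle$ is the $\mathbb{Q}$-linear span of $E$ in $\mathbb{R}$. For an additive subgroup $G\subset\mathbb{R}$, $\mathbb{C}((x^{G}))\subset\Omega$ is the subfield of series whose support (set of exponents with non-zero coefficient) is contained in $G$. *)

theory Defs
  imports Complex_Main
begin

text \<open>Generalized power series sum c_i x^mu_i are represented by their coefficient
  function f :: real => complex (f a is the coefficient of x^a).  Membership in Omega:
  the exponents form a strictly increasing sequence tending to infinity if infinite,
  i.e. for every bound r only finitely many exponents are <= r.\<close>

definition gps_support :: "(real \<Rightarrow> complex) \<Rightarrow> real set" where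
  "gps_support f = {a. f a \<noteq> 0}"

definition Omega :: "(real \<Rightarrow> complex) set" where
  "Omega = {f. \<forall>r. finite {a. f a \<noteq> 0 \<and> a \<le> r}}"

definition gps_mult :: "(real \<Rightarrow> complex) \<Rightarrow> (real \<Rightarrow> complex) \<Rightarrow> (real \<Rightarrow> complex)" where
  "gps_mult f g = (\<lambda>c. \<Sum>a\<in>{a. f a \<noteq> 0 \<and> g (c - a) \<noteq> 0}. f a * g (c - a))"

definition qspan :: "real set \<Rightarrow> real set" where
  "qspan E = {x. \<exists>S q. finite S \<and> S \<subseteq> E \<and> (\<forall>s\<in>S. q s \<in> \<rat>) \<and> x = (\<Sum>s\<in>S. q s * s)}"

definition Cx :: "real set \<Rightarrow> (real \<Rightarrow> complex) set" where
  "Cx G = {f \<in> Omega. gps_support f \<subseteq> G}"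

text \<open>The coordinate [alpha]_{mu_j}: the rational coefficient of mu_j in the unique
  decomposition alpha = [alpha]_Gamma + sum_{k<m} [alpha]_{mu_k} mu_k.\<close>
definition mu_coord :: "real set \<Rightarrow> (nat \<Rightarrow> real) \<Rightarrow> nat \<Rightarrow> nat \<Rightarrow> real \<Rightarrow> real" where
  "mu_coord \<Gamma> \<mu> m j \<alpha> = (THE q. \<exists>r. (\<forall>k<m. r k \<in> \<rat>) \<and>
       \<alpha> - (\<Sum>k<m. r k * \<mu> k) \<in> qspan \<Gamma> \<and> r j = q)"

end

theory Submission
  imports Defs
begin

text \<open>Uniqueness of the decomposition modulo \<open>\<langle>\<Gamma>\<rangle>\<close> makes the coordinate \<open>[\<alpha>]\<^sub>\<mu>\<^sub>j\<close>
  additive on \<open>\<Gamma>'\<close>. Multiplying coefficients by an additive weight \<open>w\<close> is a derivation: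
  the coefficient of \<open>x^c\<close> in a product collects the terms with exponents \<open>a\<close> and \<open>c - a\<close>,
  and \<open>w c = w a + w (c - a)\<close>.\<close>

lemma qspan_zero: "0 \<in> qspan E"
  unfolding qspan_def by (intro CollectI exI[of _ "{}"]) auto

lemma qspan_cons:
  assumes "c \<in> \<rat>" "s \<in> E" "y \<in> qspan E"
  shows "c * s + y \<in> qspan E"
proof -
  obtain S q where S: "finite S" "S \<subseteq> E" "\<forall>t\<in>S. q t \<in> \<rat>" and y: "y = (\<Sum>t\<in>S. q t * t)"
    using assms(3) unfolding qspan_def by blast
  define q' where "q' = q(s := (if s \<in> S then q s else 0) + c)"
  have "y = (if s \<in> S then q s * s else 0) + (\<Sum>t\<in>S - {s}. q t * t)"
    using S(1) by (simp add: y sum.remove)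
  also have "(\<Sum>t\<in>S - {s}. q t * t) = (\<Sum>t\<in>S - {s}. q' t * t)"
    by (rule sum.cong) (auto simp: q'_def)
  finally have "c * s + y = (\<Sum>t\<in>insert s S. q' t * t)"
    using S(1) by (simp add: sum.insert_remove q'_def algebra_simps)
  moreover have "\<forall>t\<in>insert s S. q' t \<in> \<rat>"
    using S(3) assms(1) by (auto simp: q'_def)
  ultimately show ?thesis
    unfolding qspan_def using S(1,2) assms(2) by blast
qed

lemma qspan_induct [consumes 1, case_names zero cons]:
  assumes "x \<in> qspan E"
    and "P 0"
    and "\<And>c s y. c \<in> \<rat> \<Longrightarrow> s \<in> E \<Longrightarrow> y \<in> qspan E \<Longrightarrow> P y \<Longrightarrow> P (c * s + y)"
  shows "P x"
proof -
  obtain S q where S: "finite S" "S \<subseteq> E" "\<forall>t\<in>S. q t \<in> \<rat>" and x: "x = (\<Sum>t\<in>S. q t * t)"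
    using assms(1) unfolding qspan_def by blast
  have "(\<Sum>t\<in>S. q t * t) \<in> qspan E \<and> P (\<Sum>t\<in>S. q t * t)"
    using S
  proof (induction S rule: finite_induct)
    case empty
    then show ?case using qspan_zero assms(2) by simp
  next
    case (insert t F)
    then show ?case using qspan_cons assms(3) by simp
  qed
  then show ?thesis unfolding x ..
qed

lemma qspan_add:
  assumes "x \<in> qspan E" "y \<in> qspan E"
  shows "x + y \<in> qspan E"
  using assms(1)
proof (induction x rule: qspan_induct)
  case zero
  then show ?case using assms(2) by simp
next
  case (cons c s x)
  then show ?case using qspan_cons[of c s E "x + y"] by (simp add: add.assoc)
qed

lemma qspan_mult:
  assumes "x \<in> qspan E" "c \<in> \<rat>"
  shows "c * x \<in> qspan E"
  using assms(1)
proof (induction x rule: qspan_induct)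
  case zero
  then show ?case using qspan_zero by simp
next
  case (cons d s x)
  then show ?case using qspan_cons[of "c * d" s E "c * x"] assms(2) by (simp add: algebra_simps)
qed

lemma qspan_diff:
  assumes "x \<in> qspan E" "y \<in> qspan E"
  shows "x - y \<in> qspan E"
  using qspan_add[OF assms(1) qspan_mult[OF assms(2), of "-1"]] by simp

lemma qspan_Un_image_decomp:
  fixes \<mu> :: "nat \<Rightarrow> real"
  assumes "x \<in> qspan (\<Gamma> \<union> \<mu> ` {..<m})"
  shows "\<exists>r. (\<forall>k. r k \<in> \<rat>) \<and> x - (\<Sum>k<m. r k * \<mu> k) \<in> qspan \<Gamma>"
  using assms
proof (induction x rule: qspan_induct)
  case zero
  show ?case using qspan_zero by (intro exI[of _ "\<lambda>_. 0"]) simp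
next
  case (cons c s y)
  then obtain r where r: "\<forall>k. r k \<in> \<rat>" "y - (\<Sum>k<m. r k * \<mu> k) \<in> qspan \<Gamma>"
    by blast
  show ?case
  proof (cases "s \<in> \<Gamma>")
    case True
    then show ?thesis
      using r qspan_cons[OF \<open>c \<in> \<rat>\<close> True r(2)] by (intro exI[of _ r]) (simp add: algebra_simps)
  next
    case False
    then obtain k0 where "k0 < m" "s = \<mu> k0"
      using \<open>s \<in> \<Gamma> \<union> \<mu> ` {..<m}\<close> by auto
    define r' where "r' k = r k + (if k = k0 then c else 0)" for k
    have "(\<Sum>k<m. (if k = k0 then c else 0) * \<mu> k) = c * s"
      using \<open>k0 < m\<close> \<open>s = \<mu> k0\<close> by (simp add: if_distrib[of "\<lambda>a. a * _"] cong: if_cong)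
    then have "(\<Sum>k<m. r' k * \<mu> k) = (\<Sum>k<m. r k * \<mu> k) + c * s"
      by (simp add: r'_def distrib_right sum.distrib)
    then show ?thesis
      using r \<open>c \<in> \<rat>\<close> by (intro exI[of _ r']) (simp add: r'_def algebra_simps)
  qed
qed

definition qindependent_mod :: "real set \<Rightarrow> (nat \<Rightarrow> real) \<Rightarrow> nat \<Rightarrow> bool" where
  "qindependent_mod \<Gamma> \<mu> m \<longleftrightarrow>
     (\<forall>q. (\<forall>k<m. q k \<in> \<rat>) \<and> (\<Sum>k<m. q k * \<mu> k) \<in> qspan \<Gamma> \<longrightarrow> (\<forall>k<m. q k = 0))"

lemma mu_coord_eqI:
  assumes indep: "qindependent_mod \<Gamma> \<mu> m"
    and r: "\<forall>k<m. r k \<in> \<rat>" "x - (\<Sum>k<m. r k * \<mu> k) \<in> qspan \<Gamma>"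
    and "j < m"
  shows "mu_coord \<Gamma> \<mu> m j x = r j"
  unfolding mu_coord_def
proof (rule the_equality)
  show "\<exists>r'. (\<forall>k<m. r' k \<in> \<rat>) \<and> x - (\<Sum>k<m. r' k * \<mu> k) \<in> qspan \<Gamma> \<and> r' j = r j"
    using r by blast
next
  fix q
  assume "\<exists>r'. (\<forall>k<m. r' k \<in> \<rat>) \<and> x - (\<Sum>k<m. r' k * \<mu> k) \<in> qspan \<Gamma> \<and> r' j = q"
  then obtain r' where r': "\<forall>k<m. r' k \<in> \<rat>" "x - (\<Sum>k<m. r' k * \<mu> k) \<in> qspan \<Gamma>" "r' j = q"
    by blast
  have "(x - (\<Sum>k<m. r' k * \<mu> k)) - (x - (\<Sum>k<m. r k * \<mu> k)) = (\<Sum>k<m. (r k - r' k) * \<mu> k)"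
    by (simp add: left_diff_distrib sum_subtractf)
  then have "(\<Sum>k<m. (r k - r' k) * \<mu> k) \<in> qspan \<Gamma>"
    using qspan_diff[OF r'(2) r(2)] by simp
  moreover have "\<forall>k<m. r k - r' k \<in> \<rat>"
    using r(1) r'(1) by auto
  ultimately have "\<forall>k<m. r k - r' k = 0"
    using indep unfolding qindependent_mod_def by (blast dest: spec[of _ "\<lambda>k. r k - r' k"])
  then show "q = r j"
    using \<open>j < m\<close> r'(3) by auto
qed

lemma mu_coord_add:
  assumes "qindependent_mod \<Gamma> \<mu> m" "j < m"
    and "a \<in> qspan (\<Gamma> \<union> \<mu> ` {..<m})" "b \<in> qspan (\<Gamma> \<union> \<mu> ` {..<m})"
  shows "mu_coord \<Gamma> \<mu> m j (a + b) = mu_coord \<Gamma> \<mu> m j a + mu_coord \<Gamma> \<mu> m j b"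
proof -
  obtain r where r: "\<forall>k. r k \<in> \<rat>" "a - (\<Sum>k<m. r k * \<mu> k) \<in> qspan \<Gamma>"
    using qspan_Un_image_decomp[OF assms(3)] by blast
  obtain s where s: "\<forall>k. s k \<in> \<rat>" "b - (\<Sum>k<m. s k * \<mu> k) \<in> qspan \<Gamma>"
    using qspan_Un_image_decomp[OF assms(4)] by blast
  have sum_eq: "(a + b) - (\<Sum>k<m. (r k + s k) * \<mu> k) =
      (a - (\<Sum>k<m. r k * \<mu> k)) + (b - (\<Sum>k<m. s k * \<mu> k))"
    by (simp add: distrib_right sum.distrib)
  have "(a + b) - (\<Sum>k<m. (r k + s k) * \<mu> k) \<in> qspan \<Gamma>"
    unfolding sum_eq by (rule qspan_add[OF r(2) s(2)])
  then have "mu_coord \<Gamma> \<mu> m j (a + b) = r j + s j"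
    using r(1) s(1) by (intro mu_coord_eqI[OF assms(1)] assms(2)) simp_all
  moreover have "mu_coord \<Gamma> \<mu> m j a = r j" "mu_coord \<Gamma> \<mu> m j b = s j"
    using r s by (intro mu_coord_eqI[OF assms(1)] assms(2); simp)+
  ultimately show ?thesis
    by simp
qed

lemma Omega_support_bdd_below:
  assumes "f \<in> Omega"
  obtains b where "\<And>a. f a \<noteq> 0 \<Longrightarrow> b \<le> a"
proof -
  have "finite {a. f a \<noteq> 0 \<and> a \<le> 0}"
    using assms unfolding Omega_def by blast
  then obtain b where "\<forall>a\<in>{a. f a \<noteq> 0 \<and> a \<le> 0}. b \<le> a"
    using bdd_below_finite unfolding bdd_below_def by blast
  then have "f a \<noteq> 0 \<Longrightarrow> min b 0 \<le> a" for a
    by (cases "a \<le> 0") auto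
  then show ?thesis using that by blast
qed

lemma gps_mult_support_finite:
  assumes "f \<in> Omega" "g \<in> Omega"
  shows "finite {a. f a \<noteq> 0 \<and> g (c - a) \<noteq> 0}"
proof -
  obtain b where "\<And>a. g a \<noteq> 0 \<Longrightarrow> b \<le> a"
    using Omega_support_bdd_below[OF assms(2)] by blast
  then have "{a. f a \<noteq> 0 \<and> g (c - a) \<noteq> 0} \<subseteq> {a. f a \<noteq> 0 \<and> a \<le> c - b}"
    by force
  moreover have "finite {a. f a \<noteq> 0 \<and> a \<le> c - b}"
    using assms(1) unfolding Omega_def by blast
  ultimately show ?thesis
    by (rule finite_subset)
qed

lemma Cx_mult_weight:
  assumes "f \<in> Cx G"
  shows "(\<lambda>a. w a * f a) \<in> Cx G"
proof -
  have "{a. w a * f a \<noteq> 0 \<and> a \<le> r} \<subseteq> {a. f a \<noteq> 0 \<and> a \<le> r}" for r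
    by auto
  then show ?thesis
    using assms unfolding Cx_def Omega_def gps_support_def by (auto intro: finite_subset)
qed

lemma gps_mult_weight_Leibniz:
  assumes f: "f \<in> Cx G" and g: "g \<in> Cx G"
    and additive: "\<And>a b. a \<in> G \<Longrightarrow> b \<in> G \<Longrightarrow> w (a + b) = w a + w b"
  shows "w c * gps_mult f g c = gps_mult (\<lambda>a. w a * f a) g c + gps_mult f (\<lambda>a. w a * g a) c"
proof -
  define S where "S = {a. f a \<noteq> 0 \<and> g (c - a) \<noteq> 0}"
  have "finite S"
    unfolding S_def using f g gps_mult_support_finite unfolding Cx_def by blast
  have split: "w c = w a + w (c - a)" if "a \<in> S" for a
    using additive[of a "c - a"] that f g unfolding S_def Cx_def gps_support_def by auto
  have left: "gps_mult (\<lambda>a. w a * f a) g c = (\<Sum>a\<in>S. w a * f a * g (c - a))"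
    unfolding gps_mult_def by (rule sum.mono_neutral_left[OF \<open>finite S\<close>]) (auto simp: S_def)
  have right: "gps_mult f (\<lambda>a. w a * g a) c = (\<Sum>a\<in>S. f a * (w (c - a) * g (c - a)))"
    unfolding gps_mult_def by (rule sum.mono_neutral_left[OF \<open>finite S\<close>]) (auto simp: S_def)
  have "w c * gps_mult f g c = (\<Sum>a\<in>S. w c * (f a * g (c - a)))"
    unfolding gps_mult_def S_def by (simp add: sum_distrib_left)
  also have "\<dots> = (\<Sum>a\<in>S. w a * f a * g (c - a) + f a * (w (c - a) * g (c - a)))"
    by (rule sum.cong) (auto simp: split algebra_simps)
  finally show ?thesis
    unfolding left right sum.distrib .
qed

definition gps_derivation :: "real set \<Rightarrow> ((real \<Rightarrow> complex) \<Rightarrow> (real \<Rightarrow> complex)) \<Rightarrow> bool" where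
  "gps_derivation G D \<longleftrightarrow>
     (\<forall>f\<in>Cx G. D f \<in> Cx G) \<and>
     (\<forall>f\<in>Cx G. \<forall>g\<in>Cx G. D (\<lambda>a. f a + g a) = (\<lambda>a. D f a + D g a)) \<and>
     (\<forall>f\<in>Cx G. \<forall>c. D (\<lambda>a. c * f a) = (\<lambda>a. c * D f a)) \<and>
     (\<forall>f\<in>Cx G. \<forall>g\<in>Cx G. D (gps_mult f g) = (\<lambda>a. gps_mult (D f) g a + gps_mult f (D g) a))"

lemma gps_derivation_weight:
  assumes "\<And>a b. a \<in> G \<Longrightarrow> b \<in> G \<Longrightarrow> w (a + b) = w a + w b"
  shows "gps_derivation G (\<lambda>f a. w a * f a)"
  unfolding gps_derivation_def
  using Cx_mult_weight gps_mult_weight_Leibniz[OF _ _ assms]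
  by (auto simp: distrib_left mult.left_commute)

theorem lemma1:
  fixes \<Gamma> :: "real set" and \<mu> :: "nat \<Rightarrow> real" and m :: nat
  assumes subgroup: "0 \<in> \<Gamma>" "\<forall>a\<in>\<Gamma>. \<forall>b\<in>\<Gamma>. a - b \<in> \<Gamma>"
    and indep: "\<forall>q :: nat \<Rightarrow> real. (\<forall>k<m. q k \<in> \<rat>) \<and> (\<Sum>k<m. q k * \<mu> k) \<in> qspan \<Gamma>
                  \<longrightarrow> (\<forall>k<m. q k = 0)"
  shows "\<forall>j<m. \<exists>D :: (real \<Rightarrow> complex) \<Rightarrow> (real \<Rightarrow> complex).
     (\<forall>f\<in>Cx (qspan (\<Gamma> \<union> \<mu> ` {..<m})). D f \<in> Cx (qspan (\<Gamma> \<union> \<mu> ` {..<m}))) \<and>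
     (\<forall>f\<in>Cx (qspan (\<Gamma> \<union> \<mu> ` {..<m})). \<forall>g\<in>Cx (qspan (\<Gamma> \<union> \<mu> ` {..<m})).
         D (\<lambda>a. f a + g a) = (\<lambda>a. D f a + D g a)) \<and>
     (\<forall>f\<in>Cx (qspan (\<Gamma> \<union> \<mu> ` {..<m})). \<forall>c::complex.
         D (\<lambda>a. c * f a) = (\<lambda>a. c * D f a)) \<and>
     (\<forall>f\<in>Cx (qspan (\<Gamma> \<union> \<mu> ` {..<m})). \<forall>g\<in>Cx (qspan (\<Gamma> \<union> \<mu> ` {..<m})).
         D (gps_mult f g) = (\<lambda>a. gps_mult (D f) g a + gps_mult f (D g) a)) \<and>
     (\<forall>f\<in>Cx (qspan (\<Gamma> \<union> \<mu> ` {..<m})).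
         D f = (\<lambda>a. complex_of_real (mu_coord \<Gamma> \<mu> m j a) * f a))"
proof -
  let ?G = "qspan (\<Gamma> \<union> \<mu> ` {..<m})"
  have "qindependent_mod \<Gamma> \<mu> m"
    using indep unfolding qindependent_mod_def .
  have "\<exists>D. gps_derivation ?G D \<and> (\<forall>f\<in>Cx ?G. D f = (\<lambda>a. complex_of_real (mu_coord \<Gamma> \<mu> m j a) * f a))"
    if "j < m" for j
  proof (intro exI conjI ballI)
    show "gps_derivation ?G (\<lambda>f a. complex_of_real (mu_coord \<Gamma> \<mu> m j a) * f a)"
      by (rule gps_derivation_weight)
        (simp add: mu_coord_add[OF \<open>qindependent_mod \<Gamma> \<mu> m\<close> \<open>j < m\<close>])
  qed (rule refl)
  then show ?thesis
    unfolding gps_derivation_def conj_assoc by blast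
qed

end
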